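(* For any formula $\phi$ of $\mathsf{BSML}$, if $\phi$ has the empty state property (i.e., $M,\emptyset\models\phi$ for every model $M$), then $\phi$ is downward closed (i.e., $M,s\models\phi$ and $t\subseteq s$ imply $M,t\models\phi$).
   Context: Formulas of $\mathsf{BSML}$: $\phi ::= p \mid \neg\phi \mid (\phi\wedge\phi) \mid (\phi\vee\phi) \mid \Diamond\phi \mid \mathrm{NE}$. Models $M=(W,R,V)$ are Kripke models; states are subsets $s\subseteq W$; $R[w]=\{v:wRv\}$. Support/anti-support: $s\models p$ iff $s\subseteq V(p)$; $s\dashv p$ iff $s\cap V(p)=\emptyset$; $s\models\mathrm{NE}$ iff $s\ne\emptyset$; $s\dashv\mathrm{NE}$ iff $s=\emptyset$; $s\models\neg\phi$ iff $s\dashv\phi$; $s\dashv\neg\phi$ iff $s\models\phi$; $s\models\phi\wedge\psi$ iff both; $s\dashv\phi\wedge\psi$ iff $s=t\cup u$ with $t\dashv\phi$, $u\dashv\psi$; $s\models\phi\vee\psi$ iff $s=t\cup u$ with $t\models\phi$, $u\models\psi$; $s\dashv\phi\vee\psi$ iff $s\dashv\phi$ and $s\dashv\psi$; $s\models\Diamond\phi$ iff each $w\in s$ has a nonempty $t\subseteq R[w]$ with $t\models\phi$; $s\dashv\Diamond\phi$ iff $R[w]\dashv\phi$ for all $w\in s$. *)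

theory Defs
  imports Main
begin

datatype 'p bsml = Prop 'p | Neg "'p bsml" | Conj "'p bsml" "'p bsml"
  | Disj "'p bsml" "'p bsml" | Dia "'p bsml" | NE

record ('w, 'p) kmodel =
  W :: "'w set"
  R :: "'w \<Rightarrow> 'w \<Rightarrow> bool"
  V :: "'p \<Rightarrow> 'w set"

definition is_model :: "('w, 'p) kmodel \<Rightarrow> bool" where
  "is_model M \<longleftrightarrow> W M \<noteq> {} \<and> (\<forall>w v. R M w v \<longrightarrow> w \<in> W M \<and> v \<in> W M)
     \<and> (\<forall>p. V M p \<subseteq> W M)"

definition succs :: "('w, 'p) kmodel \<Rightarrow> 'w \<Rightarrow> 'w set" where
  "succs M w = {v. R M w v}"

fun supp :: "('w, 'p) kmodel \<Rightarrow> 'w set \<Rightarrow> 'p bsml \<Rightarrow> bool"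
and anti :: "('w, 'p) kmodel \<Rightarrow> 'w set \<Rightarrow> 'p bsml \<Rightarrow> bool" where
  "supp M s (Prop p) \<longleftrightarrow> s \<subseteq> V M p"
| "supp M s NE \<longleftrightarrow> s \<noteq> {}"
| "supp M s (Neg \<phi>) \<longleftrightarrow> anti M s \<phi>"
| "supp M s (Conj \<phi> \<psi>) \<longleftrightarrow> supp M s \<phi> \<and> supp M s \<psi>"
| "supp M s (Disj \<phi> \<psi>) \<longleftrightarrow> (\<exists>t u. s = t \<union> u \<and> supp M t \<phi> \<and> supp M u \<psi>)"
| "supp M s (Dia \<phi>) \<longleftrightarrow> (\<forall>w\<in>s. \<exists>t. t \<noteq> {} \<and> t \<subseteq> succs M w \<and> supp M t \<phi>)"
| "anti M s (Prop p) \<longleftrightarrow> s \<inter> V M p = {}"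
| "anti M s NE \<longleftrightarrow> s = {}"
| "anti M s (Neg \<phi>) \<longleftrightarrow> supp M s \<phi>"
| "anti M s (Conj \<phi> \<psi>) \<longleftrightarrow> (\<exists>t u. s = t \<union> u \<and> anti M t \<phi> \<and> anti M u \<psi>)"
| "anti M s (Disj \<phi> \<psi>) \<longleftrightarrow> anti M s \<phi> \<and> anti M s \<psi>"
| "anti M s (Dia \<phi>) \<longleftrightarrow> (\<forall>w\<in>s. anti M (succs M w) \<phi>)"

definition empty_state_property :: "'p bsml \<Rightarrow> ('w, 'p) kmodel itself \<Rightarrow> bool" where
  "empty_state_property \<phi> _ \<longleftrightarrow> (\<forall>M :: ('w, 'p) kmodel. is_model M \<longrightarrow> supp M {} \<phi>)"

definition downward_closed :: "'p bsml \<Rightarrow> ('w, 'p) kmodel itself \<Rightarrow> bool" where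
  "downward_closed \<phi> _ \<longleftrightarrow> (\<forall>(M :: ('w, 'p) kmodel) s t. is_model M \<longrightarrow> s \<subseteq> W M \<longrightarrow>
      supp M s \<phi> \<longrightarrow> t \<subseteq> s \<longrightarrow> supp M t \<phi>)"

end

theory Submission
  imports Defs
begin

text \<open>Negation swaps support and anti-support, so both are shown downward closed together by
  induction on the formula, within one fixed model. Support of NE is the only atomic clause that is
  not downward closed, and support on the empty state rules it out. The two clauses that split the
  state (supported disjunction, anti-supported conjunction) restrict a split \<open>s = x \<union> y\<close> to
  \<open>t = (t \<inter> x) \<union> (t \<inter> y)\<close>; the empty state satisfies such a formula only if it satisfies both
  parts, so the induction hypothesis applies to each.\<close>

lemma supp_anti_downward_closed:
  "(supp M {} \<phi> \<longrightarrow> supp M s \<phi> \<longrightarrow> t \<subseteq> s \<longrightarrow> supp M t \<phi>) \<and>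
   (anti M {} \<phi> \<longrightarrow> anti M s \<phi> \<longrightarrow> t \<subseteq> s \<longrightarrow> anti M t \<phi>)"
proof (induction \<phi> arbitrary: s t)
  case (Conj \<phi> \<psi>)
  have "anti M t (Conj \<phi> \<psi>)"
    if empty: "anti M {} (Conj \<phi> \<psi>)" and "anti M s (Conj \<phi> \<psi>)" and "t \<subseteq> s"
  proof -
    from empty have "anti M {} \<phi>" "anti M {} \<psi>" by auto
    moreover obtain x y where "s = x \<union> y" "anti M x \<phi>" "anti M y \<psi>"
      using \<open>anti M s (Conj \<phi> \<psi>)\<close> by auto
    ultimately have "anti M (t \<inter> x) \<phi>" "anti M (t \<inter> y) \<psi>"
      using Conj.IH(1)[of x "t \<inter> x"] Conj.IH(2)[of y "t \<inter> y"] by auto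
    moreover have "t = (t \<inter> x) \<union> (t \<inter> y)" using \<open>t \<subseteq> s\<close> \<open>s = x \<union> y\<close> by auto
    ultimately show ?thesis using anti.simps(4) by blast
  qed
  then show ?case using Conj.IH(1)[of s t] Conj.IH(2)[of s t] by auto
next
  case (Disj \<phi> \<psi>)
  have "supp M t (Disj \<phi> \<psi>)"
    if empty: "supp M {} (Disj \<phi> \<psi>)" and "supp M s (Disj \<phi> \<psi>)" and "t \<subseteq> s"
  proof -
    from empty have "supp M {} \<phi>" "supp M {} \<psi>" by auto
    moreover obtain x y where "s = x \<union> y" "supp M x \<phi>" "supp M y \<psi>"
      using \<open>supp M s (Disj \<phi> \<psi>)\<close> by auto
    ultimately have "supp M (t \<inter> x) \<phi>" "supp M (t \<inter> y) \<psi>"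
      using Disj.IH(1)[of x "t \<inter> x"] Disj.IH(2)[of y "t \<inter> y"] by auto
    moreover have "t = (t \<inter> x) \<union> (t \<inter> y)" using \<open>t \<subseteq> s\<close> \<open>s = x \<union> y\<close> by auto
    ultimately show ?thesis using supp.simps(5) by blast
  qed
  then show ?case using Disj.IH(1)[of s t] Disj.IH(2)[of s t] by auto
next
  case (Neg \<phi>)
  show ?case using Neg.IH[of s t] by simp
qed auto

corollary supp_downward_closed:
  assumes "supp M {} \<phi>" and "supp M s \<phi>" and "t \<subseteq> s"
  shows "supp M t \<phi>"
  using supp_anti_downward_closed assms by blast

theorem lemma3p18:
  fixes \<phi> :: "'p bsml"
  assumes "empty_state_property \<phi> TYPE(('w, 'p) kmodel)"
  shows "downward_closed \<phi> TYPE(('w, 'p) kmodel)"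
  using assms supp_downward_closed
  unfolding empty_state_property_def downward_closed_def by blast

end
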